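(* Let $d\ge2$ and let $P$ be an essential pattern subgroup of $G(d)$ with $P(d-1)=G(d-1)$ and $[G(d):P]=4$. Then there exist $k_0,\ldots,k_{d-2}\in\{0,1,2,3\}$ such that $P$ is generated by $\{a_iz_{k_i}: 0\le i\le d-2\}\cup\{[a_1,a_{d-1}]\}$, where $z_0=\mathrm{id}$, $z_1=a_{d-1}$, $z_2=a_{d-1}^{a_0}$, $z_3=[a_0,a_{d-1}]$.
   Context: Let $X=\{0,1\}$, $X^*$ the rooted binary tree of finite words, $G(d)$ the automorphism group of the finite tree of words of length $\le d$; finite sections $g(wv)=g(w)g_w(v)$; $\pi_k$ restriction to words of length $\le k$, $P(k)=\pi_k(P)$. A subgroup $P\le G(d)$ is an essential pattern group if for every $p\in P$ and $i\in\{0,1\}$ there is $q\in P$ with $\pi_{d-1}(q)=p_i$. For $0\le i\le d-1$, $a_i\in G(d)$ swaps $0^i0w$ with $0^i1w$ for all words $w$ and fixes all other words. $[h,k]=h^{-1}k^{-1}hk$ and $h^k=k^{-1}hk$. *)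

theory Defs
  imports "HOL-Algebra.Algebra"
begin

text \<open>Words over X = {0,1}; we encode 0 as False and 1 as True.\<close>
type_synonym word = "bool list"

definition tree :: "nat \<Rightarrow> word set" where
  "tree d = {w. length w \<le> d}"

text \<open>Automorphisms of the finite rooted binary tree of words of length at most d,
  represented as functions on all words that are the identity off the tree.\<close>
definition is_aut :: "nat \<Rightarrow> (word \<Rightarrow> word) \<Rightarrow> bool" where
  "is_aut d g \<longleftrightarrow> bij_betw g (tree d) (tree d)
     \<and> (\<forall>w \<in> tree d. length (g w) = length w)
     \<and> (\<forall>v w. v @ w \<in> tree d \<longrightarrow> (\<exists>u. g (v @ w) = g v @ u))
     \<and> (\<forall>w. w \<notin> tree d \<longrightarrow> g w = w)"

definition G :: "nat \<Rightarrow> (word \<Rightarrow> word) monoid" where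
  "G d = \<lparr>carrier = {g. is_aut d g}, monoid.mult = (\<lambda>g h. g \<circ> h), one = id\<rparr>"

definition restr :: "nat \<Rightarrow> (word \<Rightarrow> word) \<Rightarrow> (word \<Rightarrow> word)" where
  "restr k g = (\<lambda>w. if length w \<le> k then g w else w)"

text \<open>Section g_v of g in G(d) at vertex v: g(v w) = g(v) g_v(w); it lies in G(d - |v|).\<close>
definition sect :: "nat \<Rightarrow> (word \<Rightarrow> word) \<Rightarrow> word \<Rightarrow> (word \<Rightarrow> word)" where
  "sect d g v = (\<lambda>w. if length w \<le> d - length v then drop (length v) (g (v @ w)) else w)"

definition essential_pattern :: "nat \<Rightarrow> (word \<Rightarrow> word) set \<Rightarrow> bool" where
  "essential_pattern d P \<longleftrightarrow> subgroup P (G d)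
     \<and> (\<forall>p \<in> P. \<forall>x::bool. \<exists>q \<in> P. restr (d - 1) q = sect d p [x])"

definition a :: "nat \<Rightarrow> nat \<Rightarrow> (word \<Rightarrow> word)" where
  "a d i = (\<lambda>w. if length w \<le> d \<and> i < length w \<and> take i w = replicate i False
                then w[i := \<not> w ! i] else w)"

definition comm :: "('g, 'b) monoid_scheme \<Rightarrow> 'g \<Rightarrow> 'g \<Rightarrow> 'g" where
  "comm H h k = inv\<^bsub>H\<^esub> h \<otimes>\<^bsub>H\<^esub> inv\<^bsub>H\<^esub> k \<otimes>\<^bsub>H\<^esub> h \<otimes>\<^bsub>H\<^esub> k"

definition conj :: "('g, 'b) monoid_scheme \<Rightarrow> 'g \<Rightarrow> 'g \<Rightarrow> 'g" where
  "conj H h k = inv\<^bsub>H\<^esub> k \<otimes>\<^bsub>H\<^esub> h \<otimes>\<^bsub>H\<^esub> k"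

definition z :: "nat \<Rightarrow> nat \<Rightarrow> (word \<Rightarrow> word)" where
  "z d k = (if k = 0 then id
            else if k = 1 then a d (d - 1)
            else if k = 2 then conj (G d) (a d (d - 1)) (a d 0)
            else comm (G d) (a d 0) (a d (d - 1)))"

end

(*
  Let K be the kernel of the restriction G(d) -> G(d-1).  It is elementary abelian, generated
  by the swaps s_x at the vertices x of level d-1, and G(d) acts on it by permuting these
  vertices.  As P maps onto G(d-1), the relation "s_x s_y in P" is a G(d)-invariant equivalence
  on level d-1, and once it relates two vertices in sibling subtrees below w it relates all
  vertices below w.

  If it did not relate 00...0 and 010...0, the four vertices ab0...0 would be pairwise
  unrelated and, together with P itself, would give five cosets of P.  Hence
  [a_1, a_{d-1}] = s_{010...0} s_{00...0} lies in P and the relation identifies all vertices with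
  the same first letter.  Then G(d) = P V for the Klein four-group V = {z_0, z_1, z_2, z_3}
  generated by the swaps at 00...0 and 10...0, and index 4 forces P and V to meet trivially.
  So a_i z_{k_i} is in P for suitable k_i.  Together with the commutator these elements
  generate a subgroup H of P which again maps onto G(d-1), because the a_i generate G(d-1);
  the same argument applied to H gives P = H V, and P meeting V trivially yields P = H.
*)

theory Submission
  imports Defs
begin

section \<open>The automorphism group G(d)\<close>

lemma mem_tree_iff [simp]: "w \<in> tree n \<longleftrightarrow> length w \<le> n"
  by (simp add: tree_def)

lemma carrier_G [simp]: "carrier (G n) = {g. is_aut n g}"
  and mult_G [simp]: "g \<otimes>\<^bsub>G n\<^esub> h = g \<circ> h"
  and one_G [simp]: "\<one>\<^bsub>G n\<^esub> = id"
  by (simp_all add: G_def)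

lemma is_aut_length: "is_aut n g \<Longrightarrow> length (g w) = length w"
  unfolding is_aut_def by (cases "length w \<le> n") auto

lemma is_aut_off_tree: "is_aut n g \<Longrightarrow> n < length w \<Longrightarrow> g w = w"
  by (simp add: is_aut_def)

lemma is_aut_prefix: "is_aut n g \<Longrightarrow> length (v @ w) \<le> n \<Longrightarrow> \<exists>u. g (v @ w) = g v @ u"
  by (simp add: is_aut_def)

lemma is_aut_take:
  assumes g: "is_aut n g" and w: "length w \<le> n"
  shows "take j (g w) = g (take j w)"
proof -
  obtain u where "g (take j w @ drop j w) = g (take j w) @ u"
    using is_aut_prefix[OF g] w by (metis append_take_drop_id)
  moreover have "length (g (take j w)) = min j (length w)" "length (g w) = length w"
    using is_aut_length[OF g] by simp_all
  ultimately show ?thesis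
    by (metis append_take_drop_id append_eq_append_conv length_take min.commute take_all_iff
        min_def take_append take_take)
qed

lemma is_aut_bij:
  assumes g: "is_aut n g" shows "bij g"
proof (rule bijI)
  show "inj g"
  proof (rule injI)
    fix v w assume e: "g v = g w"
    have "inj_on g (tree n)" using g by (simp add: is_aut_def bij_betw_def)
    moreover have "length v = length w"
      using e is_aut_length[OF g, of v] is_aut_length[OF g, of w] by simp
    ultimately show "v = w"
      using e is_aut_off_tree[OF g, of v] is_aut_off_tree[OF g, of w]
      by (cases "length v \<le> n") (auto simp: inj_on_def)
  qed
  show "surj g"
  proof (rule surjI)
    fix w
    have "g ` tree n = tree n" using g by (simp add: is_aut_def bij_betw_def)
    then show "g (if length w \<le> n then inv_into (tree n) g w else w) = w"
      using is_aut_off_tree[OF g, of w] by (auto intro: f_inv_into_f)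
  qed
qed

lemma is_aut_id: "is_aut n id"
  by (auto simp: is_aut_def)

lemma is_aut_comp:
  assumes f: "is_aut n f" and g: "is_aut n g"
  shows "is_aut n (f \<circ> g)"
  unfolding is_aut_def
proof (intro conjI allI impI ballI)
  show "bij_betw (f \<circ> g) (tree n) (tree n)"
    using f g unfolding is_aut_def using bij_betw_trans by blast
  fix v w assume vw: "v @ w \<in> tree n"
  obtain u where u: "g (v @ w) = g v @ u" using is_aut_prefix[OF g] vw by auto
  have "length (g v @ u) \<le> n" using u vw is_aut_length[OF g] by (metis mem_tree_iff)
  then obtain u' where "f (g v @ u) = f (g v) @ u'" using is_aut_prefix[OF f] by blast
  then show "\<exists>u. (f \<circ> g) (v @ w) = (f \<circ> g) v @ u" using u by auto
qed (use f g in \<open>simp_all add: is_aut_length is_aut_off_tree\<close>)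

lemma is_aut_inv_into:
  assumes g: "is_aut n g" shows "is_aut n (inv_into UNIV g)"
  unfolding is_aut_def
proof (intro conjI allI impI ballI)
  have bij: "bij g" using is_aut_bij[OF g] .
  have len: "length (inv_into UNIV g w) = length w" for w
    using is_aut_length[OF g, of "inv_into UNIV g w"] bij by (simp add: surj_f_inv_f bij_is_surj)
  then show "length (inv_into UNIV g w) = length w" for w .
  show "w \<notin> tree n \<Longrightarrow> inv_into UNIV g w = w" for w
    using is_aut_off_tree[OF g, of w] bij by (simp add: inv_f_eq bij_is_inj)
  show "bij_betw (inv_into UNIV g) (tree n) (tree n)"
  proof (rule bij_betw_subset[OF bij_imp_bij_inv[OF bij]])
    show "inv_into UNIV g ` tree n = tree n"
      using len is_aut_length[OF g] bij_is_inj[OF bij]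
      by (auto simp: image_iff intro!: bexI[of _ "g x" for x])
  qed simp
  fix v w assume vw: "v @ w \<in> tree n"
  define x where "x = inv_into UNIV g (v @ w)"
  have gx: "g x = v @ w" using bij x_def by (simp add: surj_f_inv_f bij_is_surj)
  have "g (take (length v) x) = v"
    using is_aut_take[OF g, of x "length v"] gx vw len x_def by simp
  then have "take (length v) x = inv_into UNIV g v" using bij by (metis inv_f_eq bij_is_inj)
  then show "\<exists>u. inv_into UNIV g (v @ w) = inv_into UNIV g v @ u"
    unfolding x_def[symmetric] by (metis append_take_drop_id)
qed

lemma group_G: "group (G n)"
proof (rule groupI)
  fix g assume "g \<in> carrier (G n)"
  then show "\<exists>h\<in>carrier (G n). h \<otimes>\<^bsub>G n\<^esub> g = \<one>\<^bsub>G n\<^esub>"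
    by (auto intro!: bexI[of _ "inv_into UNIV g"] is_aut_inv_into simp: is_aut_bij bij_is_inj)
qed (auto simp: is_aut_comp is_aut_id comp_assoc)

lemma is_aut_inv_G: "is_aut n g \<Longrightarrow> is_aut n (inv\<^bsub>G n\<^esub> g)"
  using group.inv_closed[OF group_G, of g n] by simp

lemma inv_G_apply [simp]:
  assumes "is_aut n g"
  shows "(inv\<^bsub>G n\<^esub> g) (g w) = w" and "g ((inv\<^bsub>G n\<^esub> g) w) = w"
  using fun_cong[OF group.l_inv[OF group_G, of g n]] fun_cong[OF group.r_inv[OF group_G, of g n]] assms
  by simp_all

lemma is_aut_child:
  assumes g: "is_aut n g" and v: "length v < n"
  obtains c where "\<And>b. g (v @ [b]) = g v @ [b \<noteq> c]"
proof -
  have child: "\<exists>c. g (v @ [b]) = g v @ [c]" for b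
  proof -
    have "take (length v) (g (v @ [b])) = g v" using is_aut_take[OF g] v by simp
    moreover have "length (drop (length v) (g (v @ [b]))) = Suc 0"
      using is_aut_length[OF g] by simp
    then obtain c where "drop (length v) (g (v @ [b])) = [c]"
      by (metis length_0_conv length_Suc_conv)
    ultimately show ?thesis by (metis append_take_drop_id)
  qed
  obtain c0 c1 where c0: "g (v @ [False]) = g v @ [c0]" and c1: "g (v @ [True]) = g v @ [c1]"
    using child by blast
  have "c0 \<noteq> c1"
  proof
    assume "c0 = c1"
    then have "g (v @ [False]) = g (v @ [True])" using c0 c1 by simp
    then show False using bij_is_inj[OF is_aut_bij[OF g]] by (auto dest: injD)
  qed
  then have "g (v @ [b]) = g v @ [b \<noteq> c0]" for b using c0 c1 by (cases b) auto
  then show ?thesis by (rule that)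
qed

lemma restr_comp: "is_aut n h \<Longrightarrow> restr k (g \<circ> h) = restr k g \<circ> restr k h"
  by (auto simp: restr_def fun_eq_iff is_aut_length)

lemma restr_apply: "length w \<le> k \<Longrightarrow> restr k g w = g w"
  by (simp add: restr_def)

lemma is_aut_restr:
  assumes g: "is_aut n g" and k: "k \<le> n"
  shows "is_aut k (restr k g)"
  unfolding is_aut_def
proof (intro conjI allI impI ballI)
  have inv: "restr k (inv\<^bsub>G n\<^esub> g) (restr k g w) = w" "restr k g (restr k (inv\<^bsub>G n\<^esub> g) w) = w" for w
    using g is_aut_inv_G[OF g] by (simp_all add: restr_def is_aut_length)
  show "bij_betw (restr k g) (tree k) (tree k)"
    by (rule bij_betwI[where g = "restr k (inv\<^bsub>G n\<^esub> g)"])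
      (use g is_aut_inv_G[OF g] inv in \<open>auto simp: restr_def is_aut_length\<close>)
  fix v w assume "v @ w \<in> tree k"
  then show "\<exists>u. restr k g (v @ w) = restr k g v @ u"
    using is_aut_prefix[OF g] k by (auto simp: restr_def)
qed (use g in \<open>simp_all add: restr_def is_aut_length\<close>)

lemma restr_hom: "k \<le> n \<Longrightarrow> restr k \<in> hom (G n) (G k)"
  by (rule homI) (simp_all add: is_aut_restr restr_comp)

section \<open>Vertex swaps\<close>

definition swap_at :: "nat \<Rightarrow> word \<Rightarrow> word \<Rightarrow> word" where
  "swap_at n v w =
     (if length w \<le> n \<and> length v < length w \<and> take (length v) w = v
      then w[length v := \<not> w ! length v] else w)"

lemma length_swap_at [simp]: "length (swap_at n v w) = length w"
  by (simp add: swap_at_def)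

lemma swap_at_swap_at [simp]: "swap_at n v (swap_at n v w) = w"
  by (auto simp: swap_at_def)

lemma swap_at_involution [simp]: "swap_at n v \<circ> swap_at n v = id"
  by (simp add: fun_eq_iff)

lemma swap_at_short: "length w \<le> length v \<Longrightarrow> swap_at n v w = w"
  by (simp add: swap_at_def)

lemma swap_at_child:
  assumes "length x = m" "length v = m" "m < n"
  shows "swap_at n x (v @ [c]) = v @ [c \<noteq> (v = x)]"
  using assms by (auto simp: swap_at_def list_update_append)

lemma swap_at_nth:
  "swap_at n v w =
     (if length w \<le> n \<and> length v < length w \<and> (\<forall>j < length v. w ! j = v ! j)
      then w[length v := \<not> w ! length v] else w)"
  unfolding swap_at_def by (cases "length v < length w") (auto simp: list_eq_iff_nth_eq)

lemma is_aut_swap_at: "is_aut n (swap_at n v)"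
  unfolding is_aut_def
proof (intro conjI allI impI ballI)
  show "bij_betw (swap_at n v) (tree n) (tree n)"
    by (rule bij_betwI[where g = "swap_at n v"]) auto
  fix x w assume "x @ w \<in> tree n"
  then show "\<exists>u. swap_at n v (x @ w) = swap_at n v x @ u"
    by (cases "length v < length x")
      (auto simp: swap_at_def list_update_append nth_append intro: exI[of _ w] exI[of _ "drop (length x) _"])
qed (simp_all add: swap_at_def)

lemma inv_swap_at [simp]: "inv\<^bsub>G n\<^esub> (swap_at n v) = swap_at n v"
  by (rule group.inv_equality[OF group_G]) (simp_all add: is_aut_swap_at)

lemma a_eq_swap_at: "a n i = swap_at n (replicate i False)"
  by (simp add: a_def swap_at_def fun_eq_iff)

lemma restr_swap_at: "k \<le> n \<Longrightarrow> restr k (swap_at n v) = swap_at k v"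
  by (auto simp: restr_def fun_eq_iff swap_at_def)

lemma restr_a: "k \<le> n \<Longrightarrow> restr k (a n i) = a k i"
  by (simp add: a_eq_swap_at restr_swap_at)

lemma swap_at_conj_ancestor:
  assumes ux: "length u < length x" "take (length u) x = u"
  shows "swap_at n u \<circ> swap_at n x \<circ> swap_at n u = swap_at n (x[length u := \<not> x ! length u])"
proof
  fix w
  let ?p = "length u" and ?x' = "x[length u := \<not> x ! length u]"
  let ?C = "\<lambda>v w. length w \<le> n \<and> length v < length w \<and> (\<forall>j<length v. w ! j = v ! j)"
  let ?w' = "w[?p := \<not> w ! ?p]"
  have on: "?C v w \<Longrightarrow> swap_at n v w = w[length v := \<not> w ! length v]" for v w
    unfolding swap_at_nth by (rule if_P)
  have off: "\<not> ?C v w \<Longrightarrow> swap_at n v w = w" for v w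
    unfolding swap_at_nth by (rule if_not_P)
  have u: "\<forall>j<?p. x ! j = u ! j" using ux by (metis nth_take)
  have Cx: "?C x w \<Longrightarrow> ?C u w" and Cx': "?C ?x' w \<Longrightarrow> ?C u w"
    using u ux(1) by (auto simp: nth_list_update)
  show "(swap_at n u \<circ> swap_at n x \<circ> swap_at n u) w = swap_at n ?x' w"
  proof (cases "?C u w")
    case False
    then have nx: "\<not> ?C x w" and nx': "\<not> ?C ?x' w" using Cx Cx' by blast+
    show ?thesis using off[OF False] off[OF nx] off[OF nx'] by simp
  next
    case True
    have Cu': "?C u ?w'" using True by (auto simp: nth_list_update)
    have restore: "swap_at n u ?w' = w"
      using on[OF Cu'] True by simp
    have iff: "?C x ?w' \<longleftrightarrow> ?C ?x' w"
      using True ux(1) by (auto simp: nth_list_update)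
    show ?thesis
    proof (cases "?C ?x' w")
      case True
      let ?w'' = "?w'[length x := \<not> ?w' ! length x]"
      have Cx: "?C x ?w'" using True iff by blast
      have Cu'': "?C u ?w''" using Cu' ux(1) by (auto simp: nth_list_update)
      have "swap_at n u ?w'' = w[length x := \<not> w ! length x]"
        using on[OF Cu''] ux(1) \<open>?C u w\<close> by (simp add: list_update_swap nth_list_update)
      then show ?thesis using on[OF \<open>?C u w\<close>] on[OF Cx] on[OF True] by simp
    next
      case False
      then have nx: "\<not> ?C x ?w'" using iff by blast
      show ?thesis using on[OF \<open>?C u w\<close>] restore off[OF nx] off[OF False] by simp
    qed
  qed
qed

lemma comp_swap_at_leaf:
  assumes g: "is_aut n g" and x: "Suc (length x) = n"
  shows "g \<circ> swap_at n x = swap_at n (g x) \<circ> g"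
proof
  fix w
  show "(g \<circ> swap_at n x) w = (swap_at n (g x) \<circ> g) w"
  proof (cases "length w = n")
    case True
    then obtain v b where w: "w = v @ [b]" and v: "length v = length x"
      using x by (metis append_butlast_last_id diff_Suc_1 length_butlast list.size(3) nat.distinct(1))
    have "length v < n" using v x by simp
    then obtain c where c: "\<And>b. g (v @ [b]) = g v @ [b \<noteq> c]" using is_aut_child[OF g] by blast
    have "g v = g x \<longleftrightarrow> v = x" using bij_is_inj[OF is_aut_bij[OF g]] by (auto dest: injD)
    then show ?thesis
      using w v x c swap_at_child[of x "length x" v n]
        swap_at_child[of "g x" "length x" "g v" n] is_aut_length[OF g] by auto
  next
    case False
    then have "\<not> (length w \<le> n \<and> length x < length w)" using x by auto
    then show ?thesis using is_aut_length[OF g, of w] is_aut_length[OF g, of x] by (auto simp: swap_at_def)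
  qed
qed

lemma conj_swap_at_leaf:
  assumes g: "is_aut n g" and x: "Suc (length x) = n"
  shows "g \<circ> swap_at n x \<circ> inv\<^bsub>G n\<^esub> g = swap_at n (g x)"
  using comp_swap_at_leaf[OF assms] g by (simp add: fun_eq_iff)

lemma subtree_transitive:
  assumes "length x = length y" "length x \<le> n" "take (length w) x = w" "take (length w) y = w"
  shows "\<exists>\<tau>. is_aut n \<tau> \<and> \<tau> x = y \<and> (\<forall>z. take (length w) z \<noteq> w \<longrightarrow> \<tau> z = z)"
  using assms
proof (induction "length x - length w" arbitrary: w x)
  case 0
  then have "x = y" by (metis diff_is_0_eq take_all)
  then show ?case using is_aut_id[of n] by (metis id_apply)
next
  case (Suc k)
  let ?i = "length w" and ?w' = "w @ [y ! length w]"
  define f where "f = (if x ! ?i = y ! ?i then id else swap_at n w)"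
  have i: "?i < length x" using Suc.hyps by simp
  have xw: "take (Suc ?i) x = w @ [x ! ?i]" and yw: "take (Suc ?i) y = ?w'"
    using Suc.prems i by (simp_all add: take_Suc_conv_app_nth)
  have f: "is_aut n f" "length (f x) = length y" "\<And>z. take ?i z \<noteq> w \<Longrightarrow> f z = z"
    using Suc.prems by (auto simp: f_def is_aut_id is_aut_swap_at swap_at_def)
  have "take (Suc ?i) (f x) = ?w'"
  proof (cases "x ! ?i = y ! ?i")
    case True
    then show ?thesis using xw by (simp add: f_def)
  next
    case False
    then have "f x = x[?i := \<not> x ! ?i]" using Suc.prems i by (simp add: f_def swap_at_def)
    then show ?thesis using xw False by (simp add: take_update_swap)
  qed
  then have "\<exists>\<tau>. is_aut n \<tau> \<and> \<tau> (f x) = y \<and> (\<forall>z. take (length ?w') z \<noteq> ?w' \<longrightarrow> \<tau> z = z)"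
    using Suc.hyps Suc.prems(1,2) f(2) yw by (intro Suc.hyps(1)) simp_all
  then obtain \<tau> where \<tau>: "is_aut n \<tau>" "\<tau> (f x) = y" "\<And>z. take (length ?w') z \<noteq> ?w' \<Longrightarrow> \<tau> z = z"
    by blast
  have "\<tau> z = z" if z: "take ?i z \<noteq> w" for z
  proof (rule \<tau>(3))
    show "take (length ?w') z \<noteq> ?w'"
    proof
      assume "take (length ?w') z = ?w'"
      then have "take ?i (take (Suc ?i) z) = w" by simp
      then show False using z by (simp add: min_def)
    qed
  qed
  then show ?case using \<tau> f by (intro exI[of _ "\<tau> \<circ> f"]) (auto simp: is_aut_comp)
qed

section \<open>Level stabilisers and generation of G(d) by the a_i\<close>

definition level_stab :: "nat \<Rightarrow> nat \<Rightarrow> (word \<Rightarrow> word) set" where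
  "level_stab n m = {g. is_aut n g \<and> (\<forall>w. length w \<le> m \<longrightarrow> g w = w)}"

definition swapped :: "nat \<Rightarrow> (word \<Rightarrow> word) \<Rightarrow> word set" where
  "swapped m g = {v. length v = m \<and> g (v @ [False]) \<noteq> v @ [False]}"

lemma finite_swapped: "finite (swapped m g)"
  by (rule finite_subset[OF _ finite_lists_length_eq[of "UNIV :: bool set" m]])
    (auto simp: swapped_def)

lemma id_mem_level_stab: "id \<in> level_stab n m"
  by (simp add: level_stab_def is_aut_id)

lemma swap_at_mem_level_stab: "m \<le> length x \<Longrightarrow> swap_at n x \<in> level_stab n m"
  by (simp add: level_stab_def is_aut_swap_at swap_at_short)

lemma level_stab_comp: "f \<in> level_stab n m \<Longrightarrow> g \<in> level_stab n m \<Longrightarrow> f \<circ> g \<in> level_stab n m"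
  by (simp add: level_stab_def is_aut_comp)

lemma restr_level_stab: "g \<in> level_stab n m \<Longrightarrow> restr m g = id"
  by (auto simp: restr_def level_stab_def fun_eq_iff)

lemma level_stab_child:
  assumes g: "g \<in> level_stab n m" and v: "length v = m" and m: "m < n"
  shows "g (v @ [b]) = v @ [b \<noteq> (v \<in> swapped m g)]"
proof -
  have aut: "is_aut n g" and gv: "g v = v" using g v by (simp_all add: level_stab_def)
  obtain c where c: "\<And>b. g (v @ [b]) = g v @ [b \<noteq> c]"
    using is_aut_child[OF aut, of v] v m by blast
  then have "v \<in> swapped m g \<longleftrightarrow> c" using v gv by (simp add: swapped_def)
  then show ?thesis using c gv by simp
qed

lemma level_stab_Suc:
  assumes g: "g \<in> level_stab n m" and e: "swapped m g = {}"
  shows "g \<in> level_stab n (Suc m)"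
proof -
  have aut: "is_aut n g" using g by (simp add: level_stab_def)
  have "g w = w" if w: "length w = Suc m" for w
  proof (cases "m < n")
    case True
    have "w = butlast w @ [last w]" using w by (metis append_butlast_last_id list.size(3) nat.distinct(1))
    then show ?thesis using level_stab_child[OF g _ True, of "butlast w" "last w"] e w by simp
  next
    case False
    then show ?thesis using is_aut_off_tree[OF aut] w by simp
  qed
  then show ?thesis using g by (auto simp: level_stab_def le_Suc_eq)
qed

lemma level_stab_swap_at_comp:
  assumes g: "g \<in> level_stab n m" and x: "x \<in> swapped m g" and m: "m < n"
  shows "swap_at n x \<circ> g \<in> level_stab n m"
    and "swapped m (swap_at n x \<circ> g) = swapped m g - {x}"
proof -
  have lx: "length x = m" using x by (simp add: swapped_def)
  then show "swap_at n x \<circ> g \<in> level_stab n m"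
    using g by (simp add: level_stab_def is_aut_comp is_aut_swap_at swap_at_short)
  have "v \<in> swapped m (swap_at n x \<circ> g) \<longleftrightarrow> v \<in> swapped m g - {x}" for v
  proof (cases "length v = m")
    case True
    then have "(swap_at n x \<circ> g) (v @ [False]) = v @ [(v \<in> swapped m g) \<noteq> (v = x)]"
      using level_stab_child[OF g True m] swap_at_child[OF lx True m] by simp
    then show ?thesis using True x by (auto simp: swapped_def[of m "swap_at n x \<circ> g"])
  next
    case False
    then show ?thesis by (simp add: swapped_def)
  qed
  then show "swapped m (swap_at n x \<circ> g) = swapped m g - {x}" by blast
qed

lemma level_stab_induct:
  assumes g: "g \<in> level_stab n m"
    and id: "P id" and comp: "\<And>f h. P f \<Longrightarrow> P h \<Longrightarrow> P (f \<circ> h)"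
    and swap: "\<And>v. m \<le> length v \<Longrightarrow> length v < n \<Longrightarrow> P (swap_at n v)"
  shows "P g"
  using g swap
proof (induction "n - m" arbitrary: m g rule: less_induct)
  case less
  show ?case
  proof (cases "m < n")
    case False
    have "g = id"
    proof
      fix w
      show "g w = id w"
        using less.prems(1) False is_aut_off_tree[of n g w] by (cases "length w \<le> m") (auto simp: level_stab_def)
    qed
    then show ?thesis using id by simp
  next
    case True
    have "P g" if "g \<in> level_stab n m" "card (swapped m g) = c" for c g
      using that
    proof (induction c arbitrary: g)
      case 0
      then have "g \<in> level_stab n (Suc m)" using level_stab_Suc finite_swapped by simp
      then show ?case using less.hyps[of "Suc m"] less.prems(2) True by simp
    next
      case (Suc c)
      then obtain x where x: "x \<in> swapped m g" by fastforce
      have "card (swapped m (swap_at n x \<circ> g)) = c"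
        using Suc.prems(2) level_stab_swap_at_comp(2)[OF Suc.prems(1) x True] x finite_swapped by simp
      then have "P (swap_at n x \<circ> g)"
        using Suc.IH level_stab_swap_at_comp(1)[OF Suc.prems(1) x True] by blast
      moreover have "P (swap_at n x)" using less.prems(2) x True by (simp add: swapped_def)
      ultimately have "P (swap_at n x \<circ> (swap_at n x \<circ> g))" using comp by blast
      then show ?case by (simp flip: comp_assoc)
    qed
    then show ?thesis using less.prems(1) by blast
  qed
qed

lemma level_stab_last_comm:
  assumes f: "f \<in> level_stab n (n - 1)" and g: "g \<in> level_stab n (n - 1)" and n: "1 \<le> n"
  shows "f \<circ> g = g \<circ> f"
proof
  fix w
  show "(f \<circ> g) w = (g \<circ> f) w"
  proof (cases "length w = n")
    case True
    then obtain v b where "w = v @ [b]" "length v = n - 1"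
      using n by (metis append_butlast_last_id diff_Suc_1 length_butlast list.size(3) not_one_le_zero)
    then show ?thesis using level_stab_child[OF f] level_stab_child[OF g] n by auto
  next
    case False
    then have "length w \<le> n - 1 \<or> n < length w" by auto
    then show ?thesis using f g by (auto simp: level_stab_def is_aut_off_tree)
  qed
qed

lemma swap_at_mem_generate:
  "length v < n \<Longrightarrow> swap_at n v \<in> generate (G n) {a n i | i. i < n}"
proof (induction "length (filter id v)" arbitrary: v rule: less_induct)
  case less
  show ?case
  proof (cases "\<exists>i < length v. v ! i")
    case False
    then have "v = replicate (length v) False" by (auto intro: nth_equalityI)
    moreover have "a n (length v) \<in> generate (G n) {a n i | i. i < n}"
      using less.prems by (auto intro: generate.incl)
    ultimately show ?thesis by (simp add: a_eq_swap_at)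
  next
    case True
    then obtain i where i: "i < length v" "v ! i" by blast
    have v: "v = take i v @ True # drop (Suc i) v" using i by (metis id_take_nth_drop)
    have "length (filter id (take i v)) < length (filter id v)"
      by (subst (2) v) simp
    moreover have "length (take i v) < n" using less.prems by simp
    ultimately have u: "swap_at n (take i v) \<in> generate (G n) {a n i | i. i < n}"
      by (rule less.hyps)
    have "length (filter id (take i v @ False # drop (Suc i) v))
        < length (filter id (take i v @ True # drop (Suc i) v))"
      by simp
    then have "length (filter id (v[i := False])) < length (filter id v)"
      using i by (simp only: upd_conv_take_nth_drop flip: v)
    moreover have "length (v[i := False]) < n" using less.prems by simp
    ultimately have x: "swap_at n (v[i := False]) \<in> generate (G n) {a n i | i. i < n}"
      by (rule less.hyps)
    have "swap_at n (take i v) \<circ> swap_at n (v[i := False]) \<circ> swap_at n (take i v)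
        \<in> generate (G n) {a n i | i. i < n}"
      using generate.eng[OF generate.eng[OF u x] u] by simp
    moreover have "(v[i := False])[i := \<not> v[i := False] ! i] = v"
      using i by (metis list_update_id list_update_overwrite nth_list_update_eq)
    ultimately show ?thesis
      using swap_at_conj_ancestor[of "take i v" "v[i := False]" n] i by simp
  qed
qed

lemma generate_a_eq_carrier: "generate (G n) {a n i | i. i < n} = carrier (G n)"
proof
  show "generate (G n) {a n i | i. i < n} \<subseteq> carrier (G n)"
    by (rule group.generate_incl[OF group_G]) (auto simp: a_eq_swap_at is_aut_swap_at)
  show "carrier (G n) \<subseteq> generate (G n) {a n i | i. i < n}"
  proof
    fix g assume "g \<in> carrier (G n)"
    then have "g \<in> level_stab n 0" using is_aut_length[of n g "[]"] by (simp add: level_stab_def)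
    then show "g \<in> generate (G n) {a n i | i. i < n}"
    proof (rule level_stab_induct)
      show "id \<in> generate (G n) {a n i | i. i < n}" using generate.one[of "G n"] by simp
      show "f \<circ> h \<in> generate (G n) {a n i | i. i < n}"
        if "f \<in> generate (G n) {a n i | i. i < n}" "h \<in> generate (G n) {a n i | i. i < n}" for f h
        using generate.eng[OF that] by simp
    qed (rule swap_at_mem_generate)
  qed
qed

lemma restr_image_eq_carrier:
  assumes H: "subgroup H (G n)" and k: "k \<le> n" and a: "\<And>i. i < k \<Longrightarrow> a k i \<in> restr k ` H"
  shows "restr k ` H = carrier (G k)"
proof -
  interpret group_hom "G n" "G k" "restr k"
    using restr_hom[OF k] by (simp add: group_hom_def group_hom_axioms_def group_G)
  have img: "subgroup (restr k ` H) (G k)" by (rule subgroup_img_is_subgroup[OF H])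
  have "generate (G k) {a k i | i. i < k} \<subseteq> restr k ` H"
    using a by (intro group.generate_subgroup_incl[OF group_G _ img]) auto
  then show ?thesis using subgroup.subset[OF img] generate_a_eq_carrier[of k] by blast
qed

section \<open>The elements z_k and the commutator [a_1, a_(d-1)]\<close>

definition left_leaf :: "nat \<Rightarrow> word" where
  "left_leaf d = replicate (d - 1) False"

definition right_leaf :: "nat \<Rightarrow> word" where
  "right_leaf d = True # replicate (d - 2) False"

lemma length_left_leaf [simp]: "length (left_leaf d) = d - 1"
  by (simp add: left_leaf_def)

lemma length_right_leaf [simp]: "2 \<le> d \<Longrightarrow> length (right_leaf d) = d - 1"
  by (simp add: right_leaf_def)

lemma a_last_eq_swap_at: "a d (d - 1) = swap_at d (left_leaf d)"
  by (simp add: a_eq_swap_at left_leaf_def)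

lemma conj_root_swap_left_leaf:
  assumes "2 \<le> d"
  shows "swap_at d [] \<circ> swap_at d (left_leaf d) \<circ> swap_at d [] = swap_at d (right_leaf d)"
proof -
  have "d - 1 = Suc (d - 2)" using assms by simp
  then have "(left_leaf d)[0 := True] = right_leaf d" "\<not> left_leaf d ! 0"
    by (simp_all add: left_leaf_def right_leaf_def)
  then show ?thesis using swap_at_conj_ancestor[of "[]" "left_leaf d" d] assms by simp
qed

definition klein :: "nat \<Rightarrow> bool \<Rightarrow> bool \<Rightarrow> word \<Rightarrow> word" where
  "klein d \<alpha> \<beta> =
     (if \<alpha> then swap_at d (left_leaf d) else id) \<circ> (if \<beta> then swap_at d (right_leaf d) else id)"

lemma klein_False_False [simp]: "klein d False False = id"
  by (simp add: klein_def)

lemma klein_mem_level_stab: "2 \<le> d \<Longrightarrow> klein d \<alpha> \<beta> \<in> level_stab d (d - 1)"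
  unfolding klein_def
  by (intro level_stab_comp) (simp_all add: swap_at_mem_level_stab id_mem_level_stab)

lemma klein_comp:
  assumes "2 \<le> d"
  shows "klein d \<alpha> \<beta> \<circ> klein d \<alpha>' \<beta>' = klein d (\<alpha> \<noteq> \<alpha>') (\<beta> \<noteq> \<beta>')"
proof -
  have "swap_at d (right_leaf d) \<circ> swap_at d (left_leaf d) = swap_at d (left_leaf d) \<circ> swap_at d (right_leaf d)"
    using level_stab_last_comm[of "swap_at d (right_leaf d)" d "swap_at d (left_leaf d)"] assms
    by (simp add: swap_at_mem_level_stab)
  then have rl: "swap_at d (right_leaf d) (swap_at d (left_leaf d) w)
      = swap_at d (left_leaf d) (swap_at d (right_leaf d) w)" for w
    by (metis comp_apply)
  show ?thesis
    by (cases \<alpha>; cases \<beta>; cases \<alpha>'; cases \<beta>') (simp_all add: klein_def fun_eq_iff rl)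
qed

lemma klein_involution: "2 \<le> d \<Longrightarrow> klein d \<alpha> \<beta> \<circ> klein d \<alpha> \<beta> = id"
  by (simp add: klein_comp)

lemma z_eq_klein:
  assumes d: "2 \<le> d" and j: "j < 4"
  shows "z d j = klein d (odd j) (2 \<le> j)"
proof -
  have a0: "a d 0 = swap_at d []" by (simp add: a_eq_swap_at)
  have z2: "z d 2 = swap_at d [] \<circ> swap_at d (left_leaf d) \<circ> swap_at d []"
    unfolding z_def conj_def a0 a_last_eq_swap_at by (simp add: is_aut_swap_at)
  have "z d 3 = (swap_at d [] \<circ> swap_at d (left_leaf d) \<circ> swap_at d []) \<circ> swap_at d (left_leaf d)"
    unfolding z_def comm_def a0 a_last_eq_swap_at by (simp add: is_aut_swap_at comp_assoc)
  also have "\<dots> = klein d False True \<circ> klein d True False"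
    using conj_root_swap_left_leaf[OF d] by (simp add: klein_def)
  finally have "z d 3 = klein d True True" using klein_comp[OF d] by simp
  moreover have "z d 2 = klein d False True"
    using z2 conj_root_swap_left_leaf[OF d] by (simp add: klein_def)
  moreover have "j = 0 \<or> j = 1 \<or> j = 2 \<or> j = 3" using j by auto
  ultimately show ?thesis using a_last_eq_swap_at[of d] by (auto simp: z_def klein_def)
qed

lemma ex_z_eq_klein: "2 \<le> d \<Longrightarrow> \<exists>j < 4. z d j = klein d \<alpha> \<beta>"
proof -
  assume d: "2 \<le> d"
  have "z d (of_bool \<alpha> + 2 * of_bool \<beta>) = klein d \<alpha> \<beta>"
    using z_eq_klein[OF d, of "of_bool \<alpha> + 2 * of_bool \<beta>"] by (cases \<alpha>; cases \<beta>) simp_all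
  then show ?thesis by (intro exI[of _ "of_bool \<alpha> + 2 * of_bool \<beta>"]) (cases \<alpha>; cases \<beta>; simp)
qed

definition branch_leaf :: "nat \<Rightarrow> bool \<Rightarrow> bool \<Rightarrow> word" where
  "branch_leaf d \<alpha> \<beta> = \<alpha> # \<beta> # replicate (d - 3) False"

lemma length_branch_leaf [simp]: "3 \<le> d \<Longrightarrow> length (branch_leaf d \<alpha> \<beta>) = d - 1"
  by (simp add: branch_leaf_def)

lemma swap_at_root_branch_leaf: "3 \<le> d \<Longrightarrow> swap_at d [] (branch_leaf d \<alpha> \<beta>) = branch_leaf d (\<not> \<alpha>) \<beta>"
  by (auto simp: branch_leaf_def swap_at_def)

lemma comm_a_1_a_last:
  assumes "3 \<le> d"
  shows "comm (G d) (a d 1) (a d (d - 1))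
    = swap_at d (branch_leaf d False True) \<circ> swap_at d (branch_leaf d False False)"
proof -
  have "d - 1 = Suc (Suc (d - 3))" using assms by simp
  then have last: "replicate (d - 1) False = branch_leaf d False False" by (simp add: branch_leaf_def)
  have "swap_at d [False] \<circ> swap_at d (branch_leaf d False False) \<circ> swap_at d [False]
      = swap_at d (branch_leaf d False True)"
    using swap_at_conj_ancestor[of "[False]" "branch_leaf d False False" d] assms
    by (simp add: branch_leaf_def)
  then show ?thesis
    unfolding comm_def a_eq_swap_at last by (simp add: is_aut_swap_at)
qed

lemma comm_a_1_a_last_2: "comm (G 2) (a 2 1) (a 2 (2 - 1)) = id"
  by (simp add: comm_def a_eq_swap_at is_aut_swap_at fun_eq_iff)

section \<open>Subgroups of G(d) mapping onto G(d-1)\<close>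

lemma (in group) rcos_eq_iff_mult_inv_mem:
  assumes H: "subgroup H G" and x: "x \<in> carrier G" and y: "y \<in> carrier G"
  shows "H #> x = H #> y \<longleftrightarrow> x \<otimes> inv y \<in> H"
proof
  assume "H #> x = H #> y"
  then have "x \<in> H #> y" using rcos_self[OF x H] by simp
  then show "x \<otimes> inv y \<in> H" using subgroup.rcos_module_imp[OF H is_group y] by blast
next
  assume "x \<otimes> inv y \<in> H"
  then have "x \<in> H #> y" using subgroup.rcos_module_rev[OF H is_group y x] by blast
  then show "H #> x = H #> y" using repr_independence[OF _ y H] by simp
qed

locale full_subgroup =
  fixes d :: nat and S :: "(word \<Rightarrow> word) set"
  assumes two_le_d: "2 \<le> d"
    and subgroup: "subgroup S (G d)"
    and restr_image: "restr (d - 1) ` S = carrier (G (d - 1))"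
begin

lemma is_aut_mem: "\<sigma> \<in> S \<Longrightarrow> is_aut d \<sigma>"
  using subgroup.subset[OF subgroup] by auto

lemma comp_mem: "\<sigma> \<in> S \<Longrightarrow> \<rho> \<in> S \<Longrightarrow> \<sigma> \<circ> \<rho> \<in> S"
  using subgroup.m_closed[OF subgroup] by simp

lemma inv_mem: "\<sigma> \<in> S \<Longrightarrow> inv\<^bsub>G d\<^esub> \<sigma> \<in> S"
  using subgroup.m_inv_closed[OF subgroup] .

lemma id_mem: "id \<in> S"
  using subgroup.one_closed[OF subgroup] by simp

lemma lift:
  assumes "is_aut d \<tau>"
  obtains \<sigma> where "\<sigma> \<in> S" "\<And>w. length w \<le> d - 1 \<Longrightarrow> \<sigma> w = \<tau> w"
proof -
  have "restr (d - 1) \<tau> \<in> restr (d - 1) ` S" using restr_image is_aut_restr[OF assms] by simp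
  then obtain \<sigma> where "\<sigma> \<in> S" "restr (d - 1) \<sigma> = restr (d - 1) \<tau>" by auto
  then show thesis using that by (metis restr_apply)
qed

definition swap_rel :: "word \<Rightarrow> word \<Rightarrow> bool" where
  "swap_rel x y \<longleftrightarrow> swap_at d x \<circ> swap_at d y \<in> S"

lemma swap_rel_iff_rcos_eq: "swap_rel x y \<longleftrightarrow> S #>\<^bsub>G d\<^esub> swap_at d x = S #>\<^bsub>G d\<^esub> swap_at d y"
  using group.rcos_eq_iff_mult_inv_mem[OF group_G subgroup] by (simp add: swap_rel_def is_aut_swap_at)

lemma rcos_eq_self_iff: "is_aut d g \<Longrightarrow> S #>\<^bsub>G d\<^esub> g = S \<longleftrightarrow> g \<in> S"
  using group.rcos_eq_iff_mult_inv_mem[OF group_G subgroup, of g id]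
    group.coset_mult_one[OF group_G subgroup.subset[OF subgroup]] monoid.inv_one[OF group.is_monoid[OF group_G], of d]
  by (simp add: is_aut_id)

lemma swap_rel_refl: "swap_rel x x"
  by (simp add: swap_rel_def id_mem)

lemma swap_rel_sym: "swap_rel x y \<Longrightarrow> swap_rel y x"
  using inv_mem[of "swap_at d x \<circ> swap_at d y"]
    group.inv_mult_group[OF group_G, of "swap_at d x" d "swap_at d y"]
  by (simp add: swap_rel_def is_aut_swap_at)

lemma swap_rel_trans: "swap_rel x y \<Longrightarrow> swap_rel y u \<Longrightarrow> swap_rel x u"
  using comp_mem[of "swap_at d x \<circ> swap_at d y" "swap_at d y \<circ> swap_at d u"]
  by (simp add: swap_rel_def fun_eq_iff comp_def)

lemma swap_at_mem_aut_invariant: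
  assumes \<tau>: "is_aut d \<tau>" and x: "length x = d - 1" and s: "swap_at d x \<in> S"
  shows "swap_at d (\<tau> x) \<in> S"
proof -
  obtain \<sigma> where \<sigma>: "\<sigma> \<in> S" "\<And>w. length w \<le> d - 1 \<Longrightarrow> \<sigma> w = \<tau> w" using lift[OF \<tau>] by blast
  have "\<sigma> \<circ> swap_at d x \<circ> inv\<^bsub>G d\<^esub> \<sigma> \<in> S" using comp_mem inv_mem \<sigma>(1) s by blast
  then show ?thesis
    using conj_swap_at_leaf[OF is_aut_mem[OF \<sigma>(1)]] \<sigma>(2) x two_le_d by simp
qed

lemma swap_rel_aut_invariant:
  assumes \<tau>: "is_aut d \<tau>" and x: "length x = d - 1" and y: "length y = d - 1" and r: "swap_rel x y"
  shows "swap_rel (\<tau> x) (\<tau> y)"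
proof -
  obtain \<sigma> where \<sigma>: "\<sigma> \<in> S" "\<And>w. length w \<le> d - 1 \<Longrightarrow> \<sigma> w = \<tau> w" using lift[OF \<tau>] by blast
  have \<sigma>_aut: "is_aut d \<sigma>" using is_aut_mem[OF \<sigma>(1)] .
  have "(\<sigma> \<circ> swap_at d x \<circ> inv\<^bsub>G d\<^esub> \<sigma>) \<circ> (\<sigma> \<circ> swap_at d y \<circ> inv\<^bsub>G d\<^esub> \<sigma>)
      = \<sigma> \<circ> (swap_at d x \<circ> swap_at d y) \<circ> inv\<^bsub>G d\<^esub> \<sigma>"
    using \<sigma>_aut by (simp add: fun_eq_iff)
  also have "\<dots> \<in> S" using comp_mem inv_mem \<sigma>(1) r by (simp add: swap_rel_def)
  finally show ?thesis
    using conj_swap_at_leaf[OF \<sigma>_aut] \<sigma>(2) x y two_le_d by (simp add: swap_rel_def)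
qed

lemma swap_rel_below:
  assumes u: "length u = d - 1" "take (Suc (length w)) u = w @ [b]"
    and u': "length u' = d - 1" "take (Suc (length w)) u' = w @ [\<not> b]"
    and r: "swap_rel u u'"
    and t: "length t = d - 1" "take (length w) t = w"
  shows "swap_rel t u"
proof -
  have "length (take (Suc (length w)) u) = Suc (length w)" using u(2) by simp
  then have "length w < d - 1" using u(1) by simp
  then have tw: "take (Suc (length w)) t = w @ [t ! length w]"
    using t by (simp add: take_Suc_conv_app_nth)
  show ?thesis
  proof (cases "t ! length w = b")
    case True
    have "length u = length t" "length u \<le> d" "take (length (w @ [b])) u = w @ [b]"
      "take (length (w @ [b])) t = w @ [b]" using u t tw True by simp_all
    then obtain \<tau> where \<tau>: "is_aut d \<tau>" "\<tau> u = t" "\<forall>z. take (length (w @ [b])) z \<noteq> w @ [b] \<longrightarrow> \<tau> z = z"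
      using subtree_transitive by blast
    have "\<tau> u' = u'" using \<tau>(3) u' by auto
    then have "swap_rel t u'" using swap_rel_aut_invariant[OF \<tau>(1) u(1) u'(1) r] \<tau>(2) by simp
    then show ?thesis using swap_rel_sym[OF r] swap_rel_trans by blast
  next
    case False
    have "length u' = length t" "length u' \<le> d" "take (length (w @ [\<not> b])) u' = w @ [\<not> b]"
      "take (length (w @ [\<not> b])) t = w @ [\<not> b]" using u' t tw False by simp_all
    then obtain \<tau> where \<tau>: "is_aut d \<tau>" "\<tau> u' = t" "\<forall>z. take (length (w @ [\<not> b])) z \<noteq> w @ [\<not> b] \<longrightarrow> \<tau> z = z"
      using subtree_transitive by blast
    have "\<tau> u = u" using \<tau>(3) u by auto
    then have "swap_rel u t" using swap_rel_aut_invariant[OF \<tau>(1) u(1) u'(1) r] \<tau>(2) by simp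
    then show ?thesis by (rule swap_rel_sym)
  qed
qed

lemma swap_at_mem_all_leaves:
  assumes x: "length x = d - 1" and s: "swap_at d x \<in> S" and t: "length t = d - 1"
  shows "swap_at d t \<in> S"
proof -
  obtain \<tau> where "is_aut d \<tau>" "\<tau> x = t"
    using subtree_transitive[of x t d "[]"] x t two_le_d by auto
  then show ?thesis using swap_at_mem_aut_invariant[OF _ x s] by blast
qed

lemma branch_leaves_unrelated:
  assumes d: "3 \<le> d" and not00: "\<not> swap_rel (branch_leaf d False False) (branch_leaf d False True)"
    and ne: "(\<alpha>, \<beta>) \<noteq> (\<alpha>', \<beta>')"
  shows "\<not> swap_rel (branch_leaf d \<alpha> \<beta>) (branch_leaf d \<alpha>' \<beta>')"
proof -
  let ?r = "branch_leaf d"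
  have len: "length (?r \<alpha> \<beta>) = d - 1" for \<alpha> \<beta> using d by simp
  have cross: "\<not> swap_rel (?r \<alpha> \<beta>) (?r (\<not> \<alpha>) \<beta>')" for \<alpha> \<beta> \<beta>'
  proof
    assume h: "swap_rel (?r \<alpha> \<beta>) (?r (\<not> \<alpha>) \<beta>')"
    have "swap_rel t (?r \<alpha> \<beta>)" if "length t = d - 1" for t
      using swap_rel_below[of _ "[]" \<alpha>, OF len _ len _ h that] by (simp add: branch_leaf_def)
    then show False using not00 len swap_rel_sym swap_rel_trans by blast
  qed
  have not11: "\<not> swap_rel (?r True False) (?r True True)"
    using swap_rel_aut_invariant[OF is_aut_swap_at[of d "[]"] len len, of True False True True] not00
    by (auto simp: swap_at_root_branch_leaf[OF d])
  show ?thesis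
    using ne cross[of \<alpha> \<beta> \<beta>'] not00 not11 swap_rel_sym
    by (cases \<alpha>; cases \<alpha>'; cases \<beta>; cases \<beta>') auto
qed

lemma swap_rel_of_index_4:
  assumes d: "3 \<le> d" and index: "card (rcosets\<^bsub>G d\<^esub> S) = 4"
  shows "swap_rel (branch_leaf d False False) (branch_leaf d False True)"
proof (rule ccontr)
  let ?r = "branch_leaf d"
  assume not00: "\<not> swap_rel (?r False False) (?r False True)"
  have len: "length (?r \<alpha> \<beta>) = d - 1" for \<alpha> \<beta> using d by simp
  define C where "C p = S #>\<^bsub>G d\<^esub> swap_at d (?r (fst p) (snd p))" for p
  have "inj C"
  proof (rule injI)
    fix p q assume "C p = C q"
    then have "swap_rel (?r (fst p) (snd p)) (?r (fst q) (snd q))" by (simp add: C_def swap_rel_iff_rcos_eq)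
    then show "p = q"
      using branch_leaves_unrelated[OF d not00, of "fst p" "snd p" "fst q" "snd q"] by auto
  qed
  then have card_C: "card (range C) = 4"
    by (simp add: card_image card_UNIV_bool card_cartesian_product flip: UNIV_Times_UNIV)
  have "S \<notin> range C"
  proof
    assume "S \<in> range C"
    then obtain \<alpha> \<beta> where "swap_at d (?r \<alpha> \<beta>) \<in> S"
      using rcos_eq_self_iff[OF is_aut_swap_at] by (auto simp: C_def)
    then have "swap_at d (?r False False) \<in> S" "swap_at d (?r False True) \<in> S"
      using swap_at_mem_all_leaves len by blast+
    then show False using not00 comp_mem by (auto simp: swap_rel_def)
  qed
  moreover have "insert S (range C) \<subseteq> rcosets\<^bsub>G d\<^esub> S"
    using group.rcosetsI[OF group_G subgroup.subset[OF subgroup]] rcos_eq_self_iff[OF is_aut_id]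
      id_mem is_aut_swap_at
    by (auto simp: C_def) (metis carrier_G mem_Collect_eq is_aut_id)
  moreover have "finite (rcosets\<^bsub>G d\<^esub> S)" using index by (metis card.infinite zero_neq_numeral)
  ultimately have "5 \<le> card (rcosets\<^bsub>G d\<^esub> S)"
    using card_C card_mono[of "rcosets\<^bsub>G d\<^esub> S" "insert S (range C)"] finite_subset by fastforce
  then show False using index by simp
qed

lemma comm_mem_of_index_4:
  assumes index: "card (rcosets\<^bsub>G d\<^esub> S) = 4"
  shows "comm (G d) (a d 1) (a d (d - 1)) \<in> S"
proof (cases "d = 2")
  case True
  then show ?thesis using comm_a_1_a_last_2 id_mem by simp
next
  case False
  then have d: "3 \<le> d" using two_le_d by simp
  then show ?thesis
    using comm_a_1_a_last[OF d] swap_rel_sym[OF swap_rel_of_index_4[OF d index]] by (simp add: swap_rel_def)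
qed

end

locale full_subgroup_comm = full_subgroup +
  assumes comm_mem: "comm (G d) (a d 1) (a d (d - 1)) \<in> S"
begin

lemma swap_rel_same_half:
  assumes x: "length x = d - 1" and y: "length y = d - 1" and xy: "x ! 0 = y ! 0"
  shows "swap_rel x y"
proof (cases "d = 2")
  case True
  then have "x = y" using x y xy by (intro nth_equalityI) auto
  then show ?thesis by (simp add: swap_rel_refl)
next
  case False
  then have d: "3 \<le> d" using two_le_d by simp
  let ?r = "branch_leaf d"
  have len: "length (?r \<alpha> \<beta>) = d - 1" for \<alpha> \<beta> using d by simp
  have F: "swap_rel (?r False True) (?r False False)"
    using comm_mem comm_a_1_a_last[OF d] by (simp add: swap_rel_def)
  then have "swap_rel (?r True True) (?r True False)"
    using swap_rel_aut_invariant[OF is_aut_swap_at len len F, of "[]"] by (simp add: swap_at_root_branch_leaf[OF d])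
  then have sibling: "swap_rel (?r \<alpha> True) (?r \<alpha> False)" for \<alpha> using F by (cases \<alpha>) simp_all
  have half: "swap_rel t (?r (t ! 0) True)" if "length t = d - 1" for t
  proof -
    have "take 1 t = [t ! 0]" using that d by (cases t) auto
    then show ?thesis
      using swap_rel_below[of _ "[t ! 0]" True, OF len _ len _ sibling that] by (simp add: branch_leaf_def)
  qed
  show ?thesis using swap_rel_trans[OF half[OF x] swap_rel_sym[OF half[OF y, folded xy]]] .
qed

lemma swap_at_klein_mem:
  assumes x: "length x = d - 1"
  shows "swap_at d x \<circ> klein d (\<not> x ! 0) (x ! 0) \<in> S"
proof -
  have "d - 1 = Suc (d - 2)" using two_le_d by simp
  then have "left_leaf d ! 0 = False" "right_leaf d ! 0 = True"
    by (simp_all add: left_leaf_def right_leaf_def)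
  then show ?thesis
    using swap_rel_same_half[OF x length_left_leaf] swap_rel_same_half[OF x length_right_leaf[OF two_le_d]]
    by (cases "x ! 0") (simp_all add: swap_rel_def klein_def)
qed

lemma level_stab_klein_coset:
  assumes "k \<in> level_stab d (d - 1)"
  shows "\<exists>\<alpha> \<beta>. k \<circ> klein d \<alpha> \<beta> \<in> S"
proof -
  have "k \<in> level_stab d (d - 1) \<and> (\<exists>\<alpha> \<beta>. k \<circ> klein d \<alpha> \<beta> \<in> S)"
    using assms
  proof (rule level_stab_induct)
    show "id \<in> level_stab d (d - 1) \<and> (\<exists>\<alpha> \<beta>. id \<circ> klein d \<alpha> \<beta> \<in> S)"
      using id_mem by (auto simp: id_mem_level_stab intro!: exI[of _ False])
  next
    fix f h
    assume f: "f \<in> level_stab d (d - 1) \<and> (\<exists>\<alpha> \<beta>. f \<circ> klein d \<alpha> \<beta> \<in> S)"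
      and h: "h \<in> level_stab d (d - 1) \<and> (\<exists>\<alpha> \<beta>. h \<circ> klein d \<alpha> \<beta> \<in> S)"
    then obtain \<alpha> \<beta> \<alpha>' \<beta>' where "f \<circ> klein d \<alpha> \<beta> \<in> S" "h \<circ> klein d \<alpha>' \<beta>' \<in> S" by blast
    then have "(f \<circ> klein d \<alpha> \<beta>) \<circ> (h \<circ> klein d \<alpha>' \<beta>') \<in> S" by (rule comp_mem)
    moreover have "klein d \<alpha> \<beta> \<circ> h = h \<circ> klein d \<alpha> \<beta>"
      using level_stab_last_comm[OF klein_mem_level_stab[OF two_le_d]] h two_le_d by simp
    ultimately have "(f \<circ> h) \<circ> klein d (\<alpha> \<noteq> \<alpha>') (\<beta> \<noteq> \<beta>') \<in> S"
      using klein_comp[OF two_le_d] by (metis comp_assoc)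
    then show "f \<circ> h \<in> level_stab d (d - 1) \<and> (\<exists>\<alpha> \<beta>. (f \<circ> h) \<circ> klein d \<alpha> \<beta> \<in> S)"
      using f h level_stab_comp by blast
  next
    fix v :: word assume "d - 1 \<le> length v" "length v < d"
    then have v: "length v = d - 1" by simp
    then show "swap_at d v \<in> level_stab d (d - 1) \<and> (\<exists>\<alpha> \<beta>. swap_at d v \<circ> klein d \<alpha> \<beta> \<in> S)"
      using swap_at_klein_mem swap_at_mem_level_stab by auto
  qed
  then show ?thesis by blast
qed

lemma exists_klein_mem:
  assumes g: "is_aut d g"
  shows "\<exists>\<alpha> \<beta>. g \<circ> klein d \<alpha> \<beta> \<in> S"
proof -
  obtain \<sigma> where \<sigma>: "\<sigma> \<in> S" "\<And>w. length w \<le> d - 1 \<Longrightarrow> \<sigma> w = g w" using lift[OF g] by blast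
  have \<sigma>_aut: "is_aut d \<sigma>" using is_aut_mem[OF \<sigma>(1)] .
  have "inv\<^bsub>G d\<^esub> \<sigma> \<circ> g \<in> level_stab d (d - 1)"
    using \<sigma>(2)[symmetric] is_aut_comp[OF is_aut_inv_G[OF \<sigma>_aut] g] \<sigma>_aut by (simp add: level_stab_def)
  then obtain \<alpha> \<beta> where "inv\<^bsub>G d\<^esub> \<sigma> \<circ> g \<circ> klein d \<alpha> \<beta> \<in> S" using level_stab_klein_coset by blast
  then have "\<sigma> \<circ> (inv\<^bsub>G d\<^esub> \<sigma> \<circ> g \<circ> klein d \<alpha> \<beta>) \<in> S" using comp_mem \<sigma>(1) by blast
  then show ?thesis using \<sigma>_aut by (auto simp: fun_eq_iff comp_def)
qed

lemma klein_mem_iff: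
  assumes index: "card (rcosets\<^bsub>G d\<^esub> S) = 4"
  shows "klein d \<alpha> \<beta> \<in> S \<longleftrightarrow> \<not> \<alpha> \<and> \<not> \<beta>"
proof
  define f where "f p = S #>\<^bsub>G d\<^esub> klein d (fst p) (snd p)" for p
  have klein_aut: "is_aut d (klein d \<alpha>' \<beta>')" for \<alpha>' \<beta>'
    using klein_mem_level_stab[OF two_le_d] by (simp add: level_stab_def)
  have klein_inv: "inv\<^bsub>G d\<^esub> (klein d \<alpha>' \<beta>') = klein d \<alpha>' \<beta>'" for \<alpha>' \<beta>'
    using group.inv_equality[OF group_G] klein_involution[OF two_le_d] klein_aut by simp
  have "rcosets\<^bsub>G d\<^esub> S \<subseteq> range f"
  proof
    fix C assume "C \<in> rcosets\<^bsub>G d\<^esub> S"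
    then obtain g where g: "is_aut d g" "C = S #>\<^bsub>G d\<^esub> g" by (auto simp: RCOSETS_def)
    then obtain \<alpha>' \<beta>' where "g \<circ> klein d \<alpha>' \<beta>' \<in> S" using exists_klein_mem by blast
    then have "C = f (\<alpha>', \<beta>')"
      using group.rcos_eq_iff_mult_inv_mem[OF group_G subgroup] g klein_aut klein_inv by (simp add: f_def)
    then show "C \<in> range f" by blast
  qed
  moreover have "range f \<subseteq> rcosets\<^bsub>G d\<^esub> S"
    using group.rcosetsI[OF group_G subgroup.subset[OF subgroup]] klein_aut by (auto simp: f_def)
  ultimately have "range f = rcosets\<^bsub>G d\<^esub> S" by blast
  then have "card (range f) = card (UNIV :: (bool \<times> bool) set)"
    using index by (simp add: card_UNIV_bool card_cartesian_product flip: UNIV_Times_UNIV)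
  then have "inj f" by (simp add: eq_card_imp_inj_on)
  assume "klein d \<alpha> \<beta> \<in> S"
  then have "f (\<alpha>, \<beta>) = f (False, False)"
    using rcos_eq_self_iff klein_aut group.coset_mult_one[OF group_G subgroup.subset[OF subgroup]]
    by (simp add: f_def)
  then show "\<not> \<alpha> \<and> \<not> \<beta>" using \<open>inj f\<close> by (auto dest: injD)
next
  show "\<not> \<alpha> \<and> \<not> \<beta> \<Longrightarrow> klein d \<alpha> \<beta> \<in> S" using id_mem by simp
qed

lemma eq_of_index_4:
  assumes index: "card (rcosets\<^bsub>G d\<^esub> S) = 4"
    and H: "full_subgroup_comm d H" and HS: "H \<subseteq> S"
  shows "H = S"
proof
  show "S \<subseteq> H"
  proof
    fix p assume p: "p \<in> S"
    obtain \<alpha> \<beta> where ph: "p \<circ> klein d \<alpha> \<beta> \<in> H"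
      using full_subgroup_comm.exists_klein_mem[OF H is_aut_mem[OF p]] by blast
    then have "inv\<^bsub>G d\<^esub> p \<circ> (p \<circ> klein d \<alpha> \<beta>) \<in> S" using comp_mem inv_mem p HS by blast
    then have "klein d \<alpha> \<beta> \<in> S" using is_aut_mem[OF p] by (simp add: fun_eq_iff comp_def)
    then show "p \<in> H" using ph klein_mem_iff[OF index] by simp
  qed
qed (rule HS)

end

lemma full_subgroup_comm_generate:
  assumes d: "2 \<le> d" and k: "\<forall>i \<le> d - 2. k i < 4"
  shows "full_subgroup_comm d (generate (G d) ({a d i \<otimes>\<^bsub>G d\<^esub> z d (k i) | i. i \<le> d - 2}
                                            \<union> {comm (G d) (a d 1) (a d (d - 1))}))"
    (is "full_subgroup_comm d (generate (G d) ?X)")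
proof -
  have z: "z d (k i) \<in> level_stab d (d - 1)" if "i \<le> d - 2" for i
    using z_eq_klein[OF d] klein_mem_level_stab[OF d] k that by simp
  have "comm (G d) (a d 1) (a d (d - 1)) \<in> carrier (G d)"
    unfolding comm_def using group.inv_closed[OF group_G] by (simp add: a_eq_swap_at is_aut_swap_at is_aut_comp)
  then have X: "?X \<subseteq> carrier (G d)"
    using z by (auto simp: level_stab_def a_eq_swap_at is_aut_swap_at is_aut_comp)
  have "restr (d - 1) ` generate (G d) ?X = carrier (G (d - 1))"
  proof (rule restr_image_eq_carrier[OF group.generate_is_subgroup[OF group_G X]])
    fix i assume i: "i < d - 1"
    then have zi: "z d (k i) \<in> level_stab d (d - 1)" using z by simp
    have "restr (d - 1) (a d i \<circ> z d (k i)) = restr (d - 1) (a d i) \<circ> restr (d - 1) (z d (k i))"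
      using restr_comp[of d "z d (k i)"] zi by (simp add: level_stab_def)
    then have "restr (d - 1) (a d i \<circ> z d (k i)) = a (d - 1) i"
      using restr_level_stab[OF zi] restr_a[of "d - 1" d i] by simp
    moreover have "a d i \<circ> z d (k i) \<in> generate (G d) ?X"
      using i by (intro generate.incl) auto
    ultimately show "a (d - 1) i \<in> restr (d - 1) ` generate (G d) ?X" by force
  qed simp
  moreover have "comm (G d) (a d 1) (a d (d - 1)) \<in> generate (G d) ?X"
    by (intro generate.incl) simp
  ultimately show ?thesis
    using d group.generate_is_subgroup[OF group_G X]
    by (simp add: full_subgroup_comm_def full_subgroup_comm_axioms_def full_subgroup_def)
qed

theorem mainTheorem10:
  fixes d :: nat and P :: "(word \<Rightarrow> word) set"
  assumes "d \<ge> 2"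
    and "essential_pattern d P"
    and "restr (d - 1) ` P = carrier (G (d - 1))"
    and "card (rcosets\<^bsub>G d\<^esub> P) = 4"
  shows "\<exists>k :: nat \<Rightarrow> nat. (\<forall>i \<le> d - 2. k i \<in> {0, 1, 2, 3}) \<and>
           P = generate (G d) ({a d i \<otimes>\<^bsub>G d\<^esub> z d (k i) | i. i \<le> d - 2}
                               \<union> {comm (G d) (a d 1) (a d (d - 1))})"
proof -
  interpret P: full_subgroup d P
    using assms(1-3) by (simp add: full_subgroup_def essential_pattern_def)
  interpret P: full_subgroup_comm d P
    using P.comm_mem_of_index_4[OF assms(4)] by unfold_locales
  have "\<exists>j. j < 4 \<and> a d i \<otimes>\<^bsub>G d\<^esub> z d j \<in> P" for i
  proof -
    obtain \<alpha> \<beta> where "a d i \<circ> klein d \<alpha> \<beta> \<in> P"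
      using P.exists_klein_mem[of "a d i"] by (auto simp: a_eq_swap_at is_aut_swap_at)
    then show ?thesis using ex_z_eq_klein[OF assms(1), of \<alpha> \<beta>] by auto
  qed
  then have "\<exists>k. \<forall>i. k i < 4 \<and> a d i \<otimes>\<^bsub>G d\<^esub> z d (k i) \<in> P" by (intro choice allI)
  then obtain k where k: "\<And>i. k i < 4" "\<And>i. a d i \<otimes>\<^bsub>G d\<^esub> z d (k i) \<in> P" by blast
  let ?H = "generate (G d) ({a d i \<otimes>\<^bsub>G d\<^esub> z d (k i) | i. i \<le> d - 2}
                           \<union> {comm (G d) (a d 1) (a d (d - 1))})"
  have "?H \<subseteq> P"
    using k(2) P.comm_mem by (intro group.generate_subgroup_incl[OF group_G _ P.subgroup]) auto
  moreover have "full_subgroup_comm d ?H"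
    by (rule full_subgroup_comm_generate[OF assms(1)]) (simp add: k(1))
  ultimately have "?H = P" using P.eq_of_index_4[OF assms(4)] by blast
  moreover have "k i \<in> {0, 1, 2, 3}" for i using k(1)[of i] by auto
  ultimately show ?thesis by (intro exI[of _ k]) simp
qed

end
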